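(* Let $n\ge1$, $I=\{1,\dots,n\}$, let $A=(a_{ij})_{n\times n}$ be a symmetric real matrix with $a_{ij}\ge0$ for all $i,j$, let $\boldsymbol\beta=(\beta_1,\dots,\beta_n)$, $\beta_i>0$, satisfy $\Lambda_I(\boldsymbol\beta)=0$ and $\Lambda_J(\boldsymbol\beta)>0$ for all $\emptyset\ne J\subsetneq I$, and let $\boldsymbol v\in(\mathbb R^2)^n$. Let $\boldsymbol\beta_m=(\beta_1^m,\dots,\beta_n^m)$ be a sequence with $\beta_i^m<\beta_i$, $\beta_i^m$ increasing in $m$ and converging to $\beta_i$ for each $i$, such that $\Lambda_J(\boldsymbol\beta_m)>0$ for all $\emptyset\ne J\subseteq I$, and for each $m$ let $\boldsymbol\rho^m=(\rho_1^m,\dots,\rho_n^m)\in\Gamma^{\boldsymbol\beta_m}$ be a minimizer of $\mathcal F_{\boldsymbol v}$ over $\Gamma^{\boldsymbol\beta_m}$. Then $\sup_m\int_{\mathbb R^2}|x|^2\rho_i^m<+\infty$ for all $i$.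
   Context: For $\emptyset\ne J\subseteq I$, $\Lambda_J(\boldsymbol\beta)=\sum_{i\in J}\beta_i\big(8\pi-\sum_{j\in J}a_{ij}\beta_j\big)$. For a vector $\boldsymbol\gamma$ with positive entries, $\Gamma^{\boldsymbol\gamma}$ is the set of $n$-tuples $\boldsymbol\rho=(\rho_1,\dots,\rho_n)$ of measurable functions on $\mathbb R^2$ with $\rho_i\ge0$, $\int\rho_i\ln\rho_i<\infty$, $\int|x|^2\rho_i<\infty$, $\int\rho_i=\gamma_i$ for all $i$. $\mathcal F_{\boldsymbol v}(\boldsymbol\rho)=\sum_{i=1}^n\int_{\mathbb R^2}\rho_i\ln\rho_i+\frac1{4\pi}\sum_{i,j=1}^na_{ij}\int\int\rho_i(x)\ln|x-y|\rho_j(y)\,d^2x\,d^2y+\sum_{i=1}^n\frac12\int_{\mathbb R^2}|x-v_i|^2\rho_i(x)\,d^2x$. *)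

theory Defs
  imports "HOL-Analysis.Analysis"
begin

definition Lambda :: "(nat \<Rightarrow> nat \<Rightarrow> real) \<Rightarrow> (nat \<Rightarrow> real) \<Rightarrow> nat set \<Rightarrow> real" where
  "Lambda A \<beta> J = (\<Sum>i\<in>J. \<beta> i * (8 * pi - (\<Sum>j\<in>J. A i j * \<beta> j)))"

definition Gamma :: "nat \<Rightarrow> (nat \<Rightarrow> real) \<Rightarrow> (nat \<Rightarrow> real ^ 2 \<Rightarrow> real) set" where
  "Gamma n \<gamma> = {\<rho>. \<forall>i\<in>{1..n}.
      \<rho> i \<in> borel_measurable lebesgue \<and>
      (\<forall>x. 0 \<le> \<rho> i x) \<and>
      integrable lebesgue (\<lambda>x. \<rho> i x * ln (\<rho> i x)) \<and>
      integrable lebesgue (\<lambda>x. (norm x)\<^sup>2 * \<rho> i x) \<and>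
      integrable lebesgue (\<rho> i) \<and>
      integral\<^sup>L lebesgue (\<rho> i) = \<gamma> i}"

definition Fv :: "nat \<Rightarrow> (nat \<Rightarrow> nat \<Rightarrow> real) \<Rightarrow> (nat \<Rightarrow> real ^ 2) \<Rightarrow> (nat \<Rightarrow> real ^ 2 \<Rightarrow> real) \<Rightarrow> real" where
  "Fv n A v \<rho> =
     (\<Sum>i\<in>{1..n}. integral\<^sup>L lebesgue (\<lambda>x. \<rho> i x * ln (\<rho> i x)))
   + (1 / (4 * pi)) * (\<Sum>i\<in>{1..n}. \<Sum>j\<in>{1..n}. A i j *
        integral\<^sup>L (lebesgue \<Otimes>\<^sub>M lebesgue) (\<lambda>(x, y). \<rho> i x * ln (norm (x - y)) * \<rho> j y))
   + (\<Sum>i\<in>{1..n}. (1/2) * integral\<^sup>L lebesgue (\<lambda>x. (norm (x - v i))\<^sup>2 * \<rho> i x))"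

end

theory Submission
  imports Defs
begin

text \<open>Compare the minimiser \<open>\<rho>\<close> with its mass-preserving concentration
  \<open>\<sigma>\<^sub>i(x) = 4 \<rho>\<^sub>i(2x)\<close>, which is again admissible. The entropy grows by
  \<open>ln 4 \<cdot> \<beta>\<^sub>i\<close>, the logarithmic interaction can only decrease because all distances
  shrink and \<open>a\<^sub>i\<^sub>j \<ge> 0\<close>, and the confinement term drops by at least a quarter of the
  second moment, up to \<open>|v\<^sub>i|\<^sup>2 \<beta>\<^sub>i / 2\<close>. Minimality of \<open>\<rho>\<close> thus bounds the sum of
  the second moments by \<open>4 \<Sum>\<^sub>i (ln 4 + |v\<^sub>i|\<^sup>2/2) \<beta>\<^sub>i\<close>, uniformly in \<open>m\<close> since
  \<open>\<beta>\<^sub>i\<^sup>m < \<beta>\<^sub>i\<close>.\<close>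

lemma sigma_finite_lebesgue: "sigma_finite_measure (lebesgue :: 'a::euclidean_space measure)"
proof
  let ?A = "range (\<lambda>k::nat. cball (0::'a) (real k))"
  have "countable ?A \<and> ?A \<subseteq> sets lebesgue \<and> \<Union> ?A = space lebesgue \<and> (\<forall>a\<in>?A. emeasure lebesgue a \<noteq> \<infinity>)"
    using emeasure_bounded_finite[OF bounded_cball] by (auto simp: real_arch_simple less_top)
  then show "\<exists>A. countable A \<and> A \<subseteq> sets (lebesgue::'a measure) \<and> \<Union> A = space lebesgue \<and> (\<forall>a\<in>A. emeasure lebesgue a \<noteq> \<infinity>)"
    by blast
qed

interpretation lebesgue: sigma_finite_measure "lebesgue :: 'a::euclidean_space measure"
  by (rule sigma_finite_lebesgue)

lemma lebesgue_scaleR: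
  fixes c :: real
  assumes "c \<noteq> 0"
  shows "(lebesgue :: 'a::euclidean_space measure) =
    density (distr lebesgue lebesgue (\<lambda>x. c *\<^sub>R x)) (\<lambda>_. \<bar>c\<bar> ^ DIM('a))"
  using lebesgue_affine_euclidean[where c="\<lambda>_::'a. c" and t=0] assms
  unfolding scaleR_scaleR[symmetric] scaleR_sum_right[symmetric] euclidean_representation prod_constant
  by simp

lemma nn_integral_lebesgue_scaleR:
  fixes f :: "'a::euclidean_space \<Rightarrow> ennreal" and c :: real
  assumes [measurable]: "f \<in> borel_measurable lebesgue" and c: "c \<noteq> 0"
  shows "(\<integral>\<^sup>+x. f x \<partial>lebesgue) = ennreal (\<bar>c\<bar> ^ DIM('a)) * (\<integral>\<^sup>+x. f (c *\<^sub>R x) \<partial>lebesgue)"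
  by (subst lebesgue_scaleR[OF c])
    (simp add: nn_integral_density nn_integral_distr nn_integral_cmult)

lemma nn_integral_lebesgue_pair_scaleR:
  fixes f :: "'a::euclidean_space \<times> 'b::euclidean_space \<Rightarrow> ennreal" and c :: real
  assumes [measurable]: "f \<in> borel_measurable (lebesgue \<Otimes>\<^sub>M lebesgue)" and c: "c \<noteq> 0"
  shows "(\<integral>\<^sup>+z. f z \<partial>(lebesgue \<Otimes>\<^sub>M lebesgue)) = ennreal (\<bar>c\<bar> ^ (DIM('a) + DIM('b))) *
    (\<integral>\<^sup>+z. f (c *\<^sub>R fst z, c *\<^sub>R snd z) \<partial>(lebesgue \<Otimes>\<^sub>M lebesgue))"
proof -
  let ?Ka = "ennreal (\<bar>c\<bar> ^ DIM('a))" and ?Kb = "ennreal (\<bar>c\<bar> ^ DIM('b))"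
  have "(\<integral>\<^sup>+z. f z \<partial>(lebesgue \<Otimes>\<^sub>M lebesgue)) = (\<integral>\<^sup>+x. \<integral>\<^sup>+y. f (x, y) \<partial>lebesgue \<partial>lebesgue)"
    by (rule lebesgue.nn_integral_fst[symmetric]) simp
  also have "\<dots> = (\<integral>\<^sup>+x. ?Kb * (\<integral>\<^sup>+y. f (x, c *\<^sub>R y) \<partial>lebesgue) \<partial>lebesgue)"
    using c by (intro nn_integral_cong nn_integral_lebesgue_scaleR) measurable
  also have "\<dots> = ?Kb * (\<integral>\<^sup>+x. \<integral>\<^sup>+y. f (x, c *\<^sub>R y) \<partial>lebesgue \<partial>lebesgue)"
    by (intro nn_integral_cmult) measurable
  also have "(\<integral>\<^sup>+x. \<integral>\<^sup>+y. f (x, c *\<^sub>R y) \<partial>lebesgue \<partial>lebesgue)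
      = ?Ka * (\<integral>\<^sup>+x. \<integral>\<^sup>+y. f (c *\<^sub>R x, c *\<^sub>R y) \<partial>lebesgue \<partial>lebesgue)"
    using c by (intro nn_integral_lebesgue_scaleR) measurable
  also have "(\<integral>\<^sup>+x. \<integral>\<^sup>+y. f (c *\<^sub>R x, c *\<^sub>R y) \<partial>lebesgue \<partial>lebesgue)
      = (\<integral>\<^sup>+z. f (c *\<^sub>R fst z, c *\<^sub>R snd z) \<partial>(lebesgue \<Otimes>\<^sub>M lebesgue))"
  proof (subst lebesgue.nn_integral_fst[symmetric])
    show "(\<lambda>z. f (c *\<^sub>R fst z, c *\<^sub>R snd z)) \<in> borel_measurable (lebesgue \<Otimes>\<^sub>M lebesgue)"
      by measurable
  qed simp
  finally show ?thesis
    by (simp add: mult.assoc[symmetric] ennreal_mult'[symmetric] power_add mult.commute)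
qed

lemma
  fixes g :: "'a \<Rightarrow> real" and K :: real
  assumes T: "T \<in> M \<rightarrow>\<^sub>M M" and S: "S \<in> M \<rightarrow>\<^sub>M M" and TS: "\<And>x. T (S x) = x"
    and K: "K > 0"
    and nn_integral_T: "\<And>f. f \<in> borel_measurable M \<Longrightarrow>
      (\<integral>\<^sup>+x. f x \<partial>M) = ennreal K * (\<integral>\<^sup>+x. f (T x) \<partial>M)"
  shows integrable_scaled_transform_iff: "integrable M (\<lambda>x. K * g (T x)) \<longleftrightarrow> integrable M g"
    and integral_scaled_transform: "(\<integral>x. K * g (T x) \<partial>M) = (\<integral>x. g x \<partial>M)"
proof -
  have measurable_iff: "(\<lambda>x. K * g (T x)) \<in> borel_measurable M \<longleftrightarrow> g \<in> borel_measurable M"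
  proof
    assume Kg: "(\<lambda>x. K * g (T x)) \<in> borel_measurable M"
    have "(\<lambda>x. (1/K) * (K * g (T (S x)))) \<in> borel_measurable M"
      using measurable_compose[OF S Kg] by measurable
    moreover have "(\<lambda>x. (1/K) * (K * g (T (S x)))) = g"
      using K TS by (auto simp: fun_eq_iff)
    ultimately show "g \<in> borel_measurable M" by simp
  next
    assume g: "g \<in> borel_measurable M"
    show "(\<lambda>x. K * g (T x)) \<in> borel_measurable M"
      using measurable_compose[OF T g] by measurable
  qed
  have nn_integral_eq: "(\<integral>\<^sup>+x. ennreal (h (K * g (T x))) \<partial>M) = (\<integral>\<^sup>+x. ennreal (h (g x)) \<partial>M)"
    if g: "g \<in> borel_measurable M" and h: "h \<in> borel_measurable borel"
      and hom: "\<And>y. h (K * y) = K * h y" for h :: "real \<Rightarrow> real"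
  proof -
    have hgT [measurable]: "(\<lambda>x. h (g (T x))) \<in> borel_measurable M"
      using measurable_compose[OF measurable_compose[OF T g] h] by simp
    have hg [measurable]: "(\<lambda>x. h (g x)) \<in> borel_measurable M"
      using measurable_compose[OF g h] by simp
    have "(\<integral>\<^sup>+x. ennreal (h (K * g (T x))) \<partial>M) = (\<integral>\<^sup>+x. ennreal K * ennreal (h (g (T x))) \<partial>M)"
      using K by (intro nn_integral_cong) (simp add: hom ennreal_mult')
    also have "\<dots> = ennreal K * (\<integral>\<^sup>+x. ennreal (h (g (T x))) \<partial>M)"
      by (intro nn_integral_cmult) measurable
    also have "\<dots> = (\<integral>\<^sup>+x. ennreal (h (g x)) \<partial>M)"
      by (intro nn_integral_T[symmetric]) measurable
    finally show ?thesis .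
  qed
  show integrable_iff: "integrable M (\<lambda>x. K * g (T x)) \<longleftrightarrow> integrable M g"
  proof -
    have "g \<in> borel_measurable M \<Longrightarrow>
        (\<integral>\<^sup>+x. ennreal (norm (K * g (T x))) \<partial>M) = (\<integral>\<^sup>+x. ennreal (norm (g x)) \<partial>M)"
      using nn_integral_eq[of norm] K by (simp add: abs_mult)
    then show ?thesis
      unfolding integrable_iff_bounded using measurable_iff by metis
  qed
  show "(\<integral>x. K * g (T x) \<partial>M) = (\<integral>x. g x \<partial>M)"
  proof (cases "integrable M g")
    case True
    then have Kg: "integrable M (\<lambda>x. K * g (T x))" using integrable_iff by simp
    have g: "g \<in> borel_measurable M" using True by simp
    show ?thesis
      unfolding real_lebesgue_integral_def[OF True] real_lebesgue_integral_def[OF Kg]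
      using nn_integral_eq[OF g, of "\<lambda>y. y"] nn_integral_eq[OF g, of uminus] by simp
  next
    case False
    then show ?thesis using integrable_iff by (simp add: not_integrable_integral_eq)
  qed
qed

lemma
  fixes g :: "'a::euclidean_space \<Rightarrow> real" and c :: real
  assumes c: "c \<noteq> 0"
  shows integrable_lebesgue_scaleR_iff:
      "integrable lebesgue (\<lambda>x. \<bar>c\<bar> ^ DIM('a) * g (c *\<^sub>R x)) \<longleftrightarrow> integrable lebesgue g"
    and integral_lebesgue_scaleR:
      "(\<integral>x. \<bar>c\<bar> ^ DIM('a) * g (c *\<^sub>R x) \<partial>lebesgue) = (\<integral>x. g x \<partial>lebesgue)"
proof -
  have T: "(\<lambda>x. c *\<^sub>R x) \<in> lebesgue \<rightarrow>\<^sub>M lebesgue"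
    and S: "(\<lambda>x. (1/c) *\<^sub>R x) \<in> lebesgue \<rightarrow>\<^sub>M lebesgue"
    by measurable
  have TS: "c *\<^sub>R ((1/c) *\<^sub>R x) = x" for x :: 'a using c by simp
  have K: "\<bar>c\<bar> ^ DIM('a) > 0" using c by simp
  note nn = nn_integral_lebesgue_scaleR[OF _ c]
  show "integrable lebesgue (\<lambda>x. \<bar>c\<bar> ^ DIM('a) * g (c *\<^sub>R x)) \<longleftrightarrow> integrable lebesgue g"
    by (rule integrable_scaled_transform_iff[OF T S TS K nn])
  show "(\<integral>x. \<bar>c\<bar> ^ DIM('a) * g (c *\<^sub>R x) \<partial>lebesgue) = (\<integral>x. g x \<partial>lebesgue)"
    by (rule integral_scaled_transform[OF T S TS K nn])
qed

lemma
  fixes g :: "'a::euclidean_space \<times> 'b::euclidean_space \<Rightarrow> real" and c :: real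
  assumes c: "c \<noteq> 0"
  defines "K \<equiv> \<bar>c\<bar> ^ (DIM('a) + DIM('b))"
  shows integrable_lebesgue_pair_scaleR_iff:
      "integrable (lebesgue \<Otimes>\<^sub>M lebesgue) (\<lambda>z. K * g (c *\<^sub>R fst z, c *\<^sub>R snd z))
        \<longleftrightarrow> integrable (lebesgue \<Otimes>\<^sub>M lebesgue) g"
    and integral_lebesgue_pair_scaleR:
      "(\<integral>z. K * g (c *\<^sub>R fst z, c *\<^sub>R snd z) \<partial>(lebesgue \<Otimes>\<^sub>M lebesgue))
        = (\<integral>z. g z \<partial>(lebesgue \<Otimes>\<^sub>M lebesgue))"
proof -
  let ?T = "\<lambda>z::'a \<times> 'b. (c *\<^sub>R fst z, c *\<^sub>R snd z)"
  let ?S = "\<lambda>z::'a \<times> 'b. ((1/c) *\<^sub>R fst z, (1/c) *\<^sub>R snd z)"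
  have T: "?T \<in> lebesgue \<Otimes>\<^sub>M lebesgue \<rightarrow>\<^sub>M lebesgue \<Otimes>\<^sub>M lebesgue"
    and S: "?S \<in> lebesgue \<Otimes>\<^sub>M lebesgue \<rightarrow>\<^sub>M lebesgue \<Otimes>\<^sub>M lebesgue"
    by measurable
  have TS: "?T (?S z) = z" for z using c by simp
  have K: "K > 0" using c by (simp add: K_def)
  have nn: "(\<integral>\<^sup>+z. f z \<partial>(lebesgue \<Otimes>\<^sub>M lebesgue)) =
      ennreal K * (\<integral>\<^sup>+z. f (?T z) \<partial>(lebesgue \<Otimes>\<^sub>M lebesgue))"
    if "f \<in> borel_measurable (lebesgue \<Otimes>\<^sub>M lebesgue)" for f
    unfolding K_def using that c by (rule nn_integral_lebesgue_pair_scaleR)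
  show "integrable (lebesgue \<Otimes>\<^sub>M lebesgue) (\<lambda>z. K * g (?T z)) \<longleftrightarrow> integrable (lebesgue \<Otimes>\<^sub>M lebesgue) g"
    by (rule integrable_scaled_transform_iff[OF T S TS K nn])
  show "(\<integral>z. K * g (?T z) \<partial>(lebesgue \<Otimes>\<^sub>M lebesgue)) = (\<integral>z. g z \<partial>(lebesgue \<Otimes>\<^sub>M lebesgue))"
    by (rule integral_scaled_transform[OF T S TS K nn])
qed

lemma (in pair_sigma_finite) integrable_product:
  fixes f :: "'a \<Rightarrow> real" and g :: "'b \<Rightarrow> real"
  assumes f: "integrable M1 f" and g: "integrable M2 g"
  shows "integrable (M1 \<Otimes>\<^sub>M M2) (\<lambda>z. f (fst z) * g (snd z))"
proof -
  have [measurable]: "f \<in> borel_measurable M1" "g \<in> borel_measurable M2"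
    using f g by auto
  have "(\<integral>\<^sup>+z. ennreal (norm (f (fst z) * g (snd z))) \<partial>(M1 \<Otimes>\<^sub>M M2))
      = (\<integral>\<^sup>+x. \<integral>\<^sup>+y. ennreal (norm (f x)) * ennreal (norm (g y)) \<partial>M2 \<partial>M1)"
    by (subst M2.nn_integral_fst[symmetric]) (simp_all add: abs_mult ennreal_mult)
  also have "\<dots> = (\<integral>\<^sup>+x. ennreal (norm (f x)) * (\<integral>\<^sup>+y. ennreal (norm (g y)) \<partial>M2) \<partial>M1)"
    by (intro nn_integral_cong nn_integral_cmult) measurable
  also have "\<dots> = (\<integral>\<^sup>+x. ennreal (norm (f x)) \<partial>M1) * (\<integral>\<^sup>+y. ennreal (norm (g y)) \<partial>M2)"
    by (intro nn_integral_multc) measurable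
  also have "\<dots> < \<infinity>"
    using f g unfolding integrable_iff_bounded by (simp add: ennreal_mult_less_top)
  finally show ?thesis
    unfolding integrable_iff_bounded by simp
qed

interpretation lebesgue_pair:
  pair_sigma_finite "lebesgue :: 'a::euclidean_space measure" "lebesgue :: 'b::euclidean_space measure"
  by (intro pair_sigma_finite.intro sigma_finite_lebesgue)

lemma borel_measurable_diff_lebesgue_pair [measurable]:
  "(\<lambda>z::'a::euclidean_space \<times> 'a. fst z - snd z) \<in> borel_measurable (lebesgue \<Otimes>\<^sub>M lebesgue)"
proof -
  have "fst \<in> borel_measurable (lebesgue \<Otimes>\<^sub>M (lebesgue :: 'a measure))"
    and "snd \<in> borel_measurable ((lebesgue :: 'a measure) \<Otimes>\<^sub>M lebesgue)"
    using measurable_compose[OF measurable_fst id_borel_measurable_lebesgue]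
      measurable_compose[OF measurable_snd id_borel_measurable_lebesgue] by (simp_all add: o_def)
  then show ?thesis by (rule borel_measurable_diff)
qed

lemma norm_diff_sq_le: "(norm (x - y))\<^sup>2 \<le> 2 * (norm x)\<^sup>2 + 2 * (norm y)\<^sup>2"
  for x y :: "'a::real_normed_vector"
proof -
  have "(norm (x - y))\<^sup>2 \<le> (norm x + norm y)\<^sup>2"
    by (simp add: power_mono norm_triangle_ineq4)
  also have "\<dots> \<le> 2 * (norm x)\<^sup>2 + 2 * (norm y)\<^sup>2"
    using zero_le_power2[of "norm x - norm y"] unfolding power2_sum power2_diff by linarith
  finally show ?thesis .
qed

lemma norm_half_diff_sq_le:
  "(norm ((1/2) *\<^sub>R x - w))\<^sup>2 \<le> (norm (x - w))\<^sup>2 - (1/2) * (norm x)\<^sup>2 + (norm w)\<^sup>2"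
  for x w :: "'a::real_inner"
proof -
  have "(norm (x - w))\<^sup>2 - (1/2) * (norm x)\<^sup>2 + (norm w)\<^sup>2 - (norm ((1/2) *\<^sub>R x - w))\<^sup>2
      = (norm ((1/2) *\<^sub>R x - w))\<^sup>2"
    by (simp add: power2_norm_eq_inner inner_diff_left inner_diff_right inner_commute algebra_simps)
  then show ?thesis by (smt (verit) zero_le_power2)
qed

lemma integrable_norm_diff_sq_mult:
  fixes r :: "'a::euclidean_space \<Rightarrow> real"
  assumes r_nonneg: "\<And>x. 0 \<le> r x" and r: "integrable lebesgue r"
    and moment: "integrable lebesgue (\<lambda>x. (norm x)\<^sup>2 * r x)"
  shows "integrable lebesgue (\<lambda>x. (norm (x - w))\<^sup>2 * r x)"
proof (rule Bochner_Integration.integrable_bound)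
  show "integrable lebesgue (\<lambda>x. 2 * ((norm x)\<^sup>2 * r x) + 2 * (norm w)\<^sup>2 * r x)"
    using r moment by auto
  have [measurable]: "r \<in> borel_measurable lebesgue" using r by simp
  have [measurable]: "(\<lambda>x::'a. (norm (x - w))\<^sup>2) \<in> borel_measurable lebesgue"
    by (intro measurable_completion) simp
  show "(\<lambda>x. (norm (x - w))\<^sup>2 * r x) \<in> borel_measurable lebesgue" by measurable
  show "AE x in lebesgue. norm ((norm (x - w))\<^sup>2 * r x) \<le> norm (2 * ((norm x)\<^sup>2 * r x) + 2 * (norm w)\<^sup>2 * r x)"
  proof (rule AE_I2)
    fix x
    have "(norm (x - w))\<^sup>2 * r x \<le> (2 * (norm x)\<^sup>2 + 2 * (norm w)\<^sup>2) * r x"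
      using r_nonneg[of x] norm_diff_sq_le[of x w] by (intro mult_right_mono) auto
    then show "norm ((norm (x - w))\<^sup>2 * r x) \<le> norm (2 * ((norm x)\<^sup>2 * r x) + 2 * (norm w)\<^sup>2 * r x)"
      using r_nonneg[of x] by (simp add: algebra_simps)
  qed
qed

definition dilate :: "(real^2 \<Rightarrow> real) \<Rightarrow> real^2 \<Rightarrow> real" where
  "dilate r x = 4 * r (2 *\<^sub>R x)"

lemma
  fixes g :: "real^2 \<Rightarrow> real"
  shows integrable_dilate_iff: "integrable lebesgue (dilate g) \<longleftrightarrow> integrable lebesgue g"
    and integral_dilate: "(\<integral>x. dilate g x \<partial>lebesgue) = (\<integral>x. g x \<partial>lebesgue)"
  using integrable_lebesgue_scaleR_iff[of 2 g] integral_lebesgue_scaleR[of 2 g]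
  by (simp_all add: dilate_def[abs_def])

lemma dilate_nonneg: "(\<And>y. 0 \<le> r y) \<Longrightarrow> 0 \<le> dilate r x"
  by (simp add: dilate_def)

lemma entropy_dilate:
  assumes "\<And>y. 0 \<le> r y"
  shows "(\<lambda>x. dilate r x * ln (dilate r x)) = dilate (\<lambda>y. r y * ln (r y) + ln 4 * r y)"
proof
  fix x
  show "dilate r x * ln (dilate r x) = dilate (\<lambda>y. r y * ln (r y) + ln 4 * r y) x"
  proof (cases "r (2 *\<^sub>R x) = 0")
    case False
    then have "r (2 *\<^sub>R x) > 0" using assms[of "2 *\<^sub>R x"] by simp
    then show ?thesis by (simp add: dilate_def ln_mult algebra_simps)
  qed (simp add: dilate_def)
qed

lemma moment_dilate: "(\<lambda>x. (norm x)\<^sup>2 * dilate r x) = dilate (\<lambda>y. (1/4) * ((norm y)\<^sup>2 * r y))"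
  by (simp add: dilate_def fun_eq_iff power_mult_distrib)

lemma potential_dilate:
  "(\<lambda>x. (norm (x - w))\<^sup>2 * dilate r x) = dilate (\<lambda>y. (norm ((1/2) *\<^sub>R y - w))\<^sup>2 * r y)"
  by (simp add: dilate_def fun_eq_iff)

lemma interaction_dilate_le:
  fixes r s :: "real^2 \<Rightarrow> real"
  assumes r_nonneg: "\<And>x. 0 \<le> r x" and s_nonneg: "\<And>x. 0 \<le> s x"
    and r: "integrable lebesgue r" and s: "integrable lebesgue s"
  shows "(\<integral>(x, y). dilate r x * ln (norm (x - y)) * dilate s y \<partial>(lebesgue \<Otimes>\<^sub>M lebesgue))
    \<le> (\<integral>(x, y). r x * ln (norm (x - y)) * s y \<partial>(lebesgue \<Otimes>\<^sub>M lebesgue))"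
proof -
  have [measurable]: "r \<in> borel_measurable lebesgue" "s \<in> borel_measurable lebesgue"
    using r s by auto
  define F where "F = (\<lambda>(x::real^2, y::real^2). r x * ln (norm (x - y)) * s y)"
  define G where "G = (\<lambda>(x::real^2, y::real^2). r x * ln (norm (x - y) / 2) * s y)"
  define D where "D = (\<lambda>z. G z - F z)"
  have F_meas: "F \<in> borel_measurable (lebesgue \<Otimes>\<^sub>M lebesgue)"
    unfolding F_def by measurable
  have G_meas: "G \<in> borel_measurable (lebesgue \<Otimes>\<^sub>M lebesgue)"
    unfolding G_def by measurable
  have D_nonpos: "D z \<le> 0" and D_bound: "\<bar>D z\<bar> \<le> ln 2 * (r (fst z) * s (snd z))" for z
  proof -
    obtain x y where z: "z = (x, y)" by (cases z)
    \<comment> \<open>on the diagonal both logarithms are \<open>ln 0 = 0\<close>\<close>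
    have "D z = (if x = y then 0 else - ln 2 * (r x * s y))"
      by (auto simp: z D_def F_def G_def ln_div algebra_simps)
    moreover have "0 \<le> r x * s y" using r_nonneg s_nonneg by simp
    ultimately show "D z \<le> 0" "\<bar>D z\<bar> \<le> ln 2 * (r (fst z) * s (snd z))"
      by (auto simp: z abs_mult)
  qed
  have D_int: "integrable (lebesgue \<Otimes>\<^sub>M lebesgue) D"
  proof (rule Bochner_Integration.integrable_bound)
    show "integrable (lebesgue \<Otimes>\<^sub>M lebesgue) (\<lambda>z. ln 2 * (r (fst z) * s (snd z)))"
      using lebesgue_pair.integrable_product[OF r s] by simp
    show "D \<in> borel_measurable (lebesgue \<Otimes>\<^sub>M lebesgue)"
      unfolding D_def using F_meas G_meas by measurable
    show "AE z in lebesgue \<Otimes>\<^sub>M lebesgue. norm (D z) \<le> norm (ln 2 * (r (fst z) * s (snd z)))"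
    proof (rule AE_I2)
      fix z
      show "norm (D z) \<le> norm (ln 2 * (r (fst z) * s (snd z)))"
        using D_bound[of z] abs_ge_self[of "ln 2 * (r (fst z) * s (snd z))"] by simp
    qed
  qed
  have dilated: "(\<lambda>(x, y). dilate r x * ln (norm (x - y)) * dilate s y) = (\<lambda>z. 16 * G (2 *\<^sub>R fst z, 2 *\<^sub>R snd z))"
    by (auto simp: dilate_def G_def fun_eq_iff scaleR_diff_right[symmetric])
  have "(\<integral>z. 16 * G (2 *\<^sub>R fst z, 2 *\<^sub>R snd z) \<partial>(lebesgue \<Otimes>\<^sub>M lebesgue))
      = (\<integral>z. G z \<partial>(lebesgue \<Otimes>\<^sub>M lebesgue))"
    using integral_lebesgue_pair_scaleR[of 2 G] by simp
  also have "\<dots> \<le> (\<integral>z. F z \<partial>(lebesgue \<Otimes>\<^sub>M lebesgue))"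
  proof (cases "integrable (lebesgue \<Otimes>\<^sub>M lebesgue) F")
    case True
    moreover have "integrable (lebesgue \<Otimes>\<^sub>M lebesgue) G"
      using Bochner_Integration.integrable_add[OF True D_int] by (simp add: D_def)
    moreover have "G z \<le> F z" for z
      using D_nonpos[of z] by (simp add: D_def)
    ultimately show ?thesis by (intro integral_mono)
  next
    case False
    then have "\<not> integrable (lebesgue \<Otimes>\<^sub>M lebesgue) G"
      using D_int Bochner_Integration.integrable_diff[of _ G D] by (auto simp: D_def)
    with False show ?thesis by (simp add: not_integrable_integral_eq)
  qed
  finally show ?thesis unfolding dilated F_def .
qed

lemma Gamma_memberD:
  assumes "\<rho> \<in> Gamma n b" and "i \<in> {1..n}"
  shows "\<And>x. 0 \<le> \<rho> i x"
    and "integrable lebesgue (\<lambda>x. \<rho> i x * ln (\<rho> i x))"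
    and "integrable lebesgue (\<lambda>x. (norm x)\<^sup>2 * \<rho> i x)"
    and "integrable lebesgue (\<rho> i)"
    and "(\<integral>x. \<rho> i x \<partial>lebesgue) = b i"
  using assms unfolding Gamma_def by auto

lemma
  assumes "\<rho> \<in> Gamma n b" and i: "i \<in> {1..n}"
  shows integrable_entropy_dilate: "integrable lebesgue (\<lambda>x. dilate (\<rho> i) x * ln (dilate (\<rho> i) x))"
    and integral_entropy_dilate: "(\<integral>x. dilate (\<rho> i) x * ln (dilate (\<rho> i) x) \<partial>lebesgue)
      = (\<integral>x. \<rho> i x * ln (\<rho> i x) \<partial>lebesgue) + ln 4 * b i"
  using Gamma_memberD[OF assms]
  by (simp_all add: entropy_dilate integrable_dilate_iff integral_dilate)

lemma integrable_moment_dilate: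
  assumes "\<rho> \<in> Gamma n b" and "i \<in> {1..n}"
  shows "integrable lebesgue (\<lambda>x. (norm x)\<^sup>2 * dilate (\<rho> i) x)"
  using Gamma_memberD[OF assms] by (simp add: moment_dilate integrable_dilate_iff)

lemma dilate_in_Gamma:
  assumes \<rho>: "\<rho> \<in> Gamma n b"
  shows "(\<lambda>i. dilate (\<rho> i)) \<in> Gamma n b"
  unfolding Gamma_def
proof (intro CollectI ballI conjI allI)
  fix i x assume i: "i \<in> {1..n}"
  note \<rho>i = Gamma_memberD[OF \<rho> i]
  show "integrable lebesgue (dilate (\<rho> i))" and "(\<integral>x. dilate (\<rho> i) x \<partial>lebesgue) = b i"
    using \<rho>i by (simp_all add: integrable_dilate_iff integral_dilate)
  then show "dilate (\<rho> i) \<in> borel_measurable lebesgue" by simp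
  show "0 \<le> dilate (\<rho> i) x" using \<rho>i by (simp add: dilate_nonneg)
qed (use integrable_entropy_dilate integrable_moment_dilate \<rho> in auto)

lemma potential_dilate_le:
  assumes \<rho>: "\<rho> \<in> Gamma n b" and i: "i \<in> {1..n}"
  shows "(\<integral>x. (norm (x - w))\<^sup>2 * dilate (\<rho> i) x \<partial>lebesgue)
    \<le> (\<integral>x. (norm (x - w))\<^sup>2 * \<rho> i x \<partial>lebesgue) - (1/2) * (\<integral>x. (norm x)\<^sup>2 * \<rho> i x \<partial>lebesgue)
      + (norm w)\<^sup>2 * b i"
proof -
  note \<rho>i = Gamma_memberD[OF \<rho> i]
  let ?g = "\<lambda>y. (norm (y - w))\<^sup>2 * \<rho> i y - (1/2) * ((norm y)\<^sup>2 * \<rho> i y) + (norm w)\<^sup>2 * \<rho> i y"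
  have g_int: "integrable lebesgue ?g"
    using \<rho>i integrable_norm_diff_sq_mult[of "\<rho> i" w] by auto
  have le_g: "(norm ((1/2) *\<^sub>R y - w))\<^sup>2 * \<rho> i y \<le> ?g y" for y
    using mult_right_mono[OF norm_half_diff_sq_le[of y w] \<rho>i(1)[of y]] by (simp add: algebra_simps)
  have g_nonneg: "0 \<le> ?g y" for y
    using order_trans[OF _ le_g[of y]] \<rho>i(1)[of y] by simp
  have "(\<integral>x. (norm (x - w))\<^sup>2 * dilate (\<rho> i) x \<partial>lebesgue)
      = (\<integral>y. (norm ((1/2) *\<^sub>R y - w))\<^sup>2 * \<rho> i y \<partial>lebesgue)"
    by (simp add: potential_dilate integral_dilate)
  also have "\<dots> \<le> (\<integral>y. ?g y \<partial>lebesgue)"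
    using g_int le_g g_nonneg by (intro integral_mono') auto
  also have "\<dots> = (\<integral>x. (norm (x - w))\<^sup>2 * \<rho> i x \<partial>lebesgue) - (1/2) * (\<integral>x. (norm x)\<^sup>2 * \<rho> i x \<partial>lebesgue)
      + (norm w)\<^sup>2 * b i"
    using \<rho>i integrable_norm_diff_sq_mult[of "\<rho> i" w] by simp
  finally show ?thesis .
qed

lemma Fv_dilate_le:
  assumes A_nonneg: "\<forall>i\<in>{1..n}. \<forall>j\<in>{1..n}. A i j \<ge> 0" and \<rho>: "\<rho> \<in> Gamma n b"
  shows "Fv n A v (\<lambda>i. dilate (\<rho> i)) \<le> Fv n A v \<rho>
    + (\<Sum>i\<in>{1..n}. ln 4 * b i + (1/2) * (norm (v i))\<^sup>2 * b i)
    - (1/4) * (\<Sum>i\<in>{1..n}. \<integral>x. (norm x)\<^sup>2 * \<rho> i x \<partial>lebesgue)"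
proof -
  let ?\<sigma> = "\<lambda>i. dilate (\<rho> i)"
  let ?M = "\<lambda>i. \<integral>x. (norm x)\<^sup>2 * \<rho> i x \<partial>lebesgue"
  have entropy: "(\<Sum>i\<in>{1..n}. \<integral>x. ?\<sigma> i x * ln (?\<sigma> i x) \<partial>lebesgue)
      = (\<Sum>i\<in>{1..n}. \<integral>x. \<rho> i x * ln (\<rho> i x) \<partial>lebesgue) + (\<Sum>i\<in>{1..n}. ln 4 * b i)"
    using integral_entropy_dilate[OF \<rho>] by (simp add: sum.distrib[symmetric])
  have interaction: "(\<Sum>i\<in>{1..n}. \<Sum>j\<in>{1..n}. A i j *
        (\<integral>(x, y). ?\<sigma> i x * ln (norm (x - y)) * ?\<sigma> j y \<partial>(lebesgue \<Otimes>\<^sub>M lebesgue)))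
    \<le> (\<Sum>i\<in>{1..n}. \<Sum>j\<in>{1..n}. A i j *
        (\<integral>(x, y). \<rho> i x * ln (norm (x - y)) * \<rho> j y \<partial>(lebesgue \<Otimes>\<^sub>M lebesgue)))"
    using A_nonneg Gamma_memberD[OF \<rho>]
    by (intro sum_mono mult_left_mono interaction_dilate_le) auto
  have "(\<Sum>i\<in>{1..n}. (1/2) * (\<integral>x. (norm (x - v i))\<^sup>2 * ?\<sigma> i x \<partial>lebesgue))
      \<le> (\<Sum>i\<in>{1..n}. (1/2) * ((\<integral>x. (norm (x - v i))\<^sup>2 * \<rho> i x \<partial>lebesgue) - (1/2) * ?M i
          + (norm (v i))\<^sup>2 * b i))"
    using potential_dilate_le[OF \<rho>] by (intro sum_mono) auto
  also have "\<dots> = (\<Sum>i\<in>{1..n}. (1/2) * (\<integral>x. (norm (x - v i))\<^sup>2 * \<rho> i x \<partial>lebesgue))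
      - (1/4) * (\<Sum>i\<in>{1..n}. ?M i) + (\<Sum>i\<in>{1..n}. (1/2) * (norm (v i))\<^sup>2 * b i)"
    by (simp add: sum.distrib sum_subtractf sum_distrib_left algebra_simps)
  finally have potential: "(\<Sum>i\<in>{1..n}. (1/2) * (\<integral>x. (norm (x - v i))\<^sup>2 * ?\<sigma> i x \<partial>lebesgue))
      \<le> (\<Sum>i\<in>{1..n}. (1/2) * (\<integral>x. (norm (x - v i))\<^sup>2 * \<rho> i x \<partial>lebesgue))
        - (1/4) * (\<Sum>i\<in>{1..n}. ?M i) + (\<Sum>i\<in>{1..n}. (1/2) * (norm (v i))\<^sup>2 * b i)" .
  show ?thesis
    using entropy mult_left_mono[OF interaction, of "1 / (4 * pi)"] potential
    unfolding Fv_def sum.distrib by simp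
qed

lemma moment_sum_le_of_minimizer:
  assumes A_nonneg: "\<forall>i\<in>{1..n}. \<forall>j\<in>{1..n}. A i j \<ge> 0"
    and \<rho>: "\<rho> \<in> Gamma n b" and min: "\<forall>\<sigma>\<in>Gamma n b. Fv n A v \<rho> \<le> Fv n A v \<sigma>"
  shows "(\<Sum>i\<in>{1..n}. \<integral>x. (norm x)\<^sup>2 * \<rho> i x \<partial>lebesgue)
    \<le> 4 * (\<Sum>i\<in>{1..n}. ln 4 * b i + (1/2) * (norm (v i))\<^sup>2 * b i)"
  using min dilate_in_Gamma[OF \<rho>] Fv_dilate_le[OF A_nonneg \<rho>, of v] by fastforce

theorem lemma8:
  fixes n :: nat
    and A :: "nat \<Rightarrow> nat \<Rightarrow> real"
    and \<beta> :: "nat \<Rightarrow> real"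
    and v :: "nat \<Rightarrow> real ^ 2"
    and \<beta>m :: "nat \<Rightarrow> nat \<Rightarrow> real"
    and \<rho> :: "nat \<Rightarrow> nat \<Rightarrow> real ^ 2 \<Rightarrow> real"
  assumes n_pos: "n \<ge> 1"
    and A_sym: "\<forall>i\<in>{1..n}. \<forall>j\<in>{1..n}. A i j = A j i"
    and A_nonneg: "\<forall>i\<in>{1..n}. \<forall>j\<in>{1..n}. A i j \<ge> 0"
    and \<beta>_pos: "\<forall>i\<in>{1..n}. \<beta> i > 0"
    and Lambda_I: "Lambda A \<beta> {1..n} = 0"
    and Lambda_J: "\<forall>J. J \<noteq> {} \<and> J \<subset> {1..n} \<longrightarrow> Lambda A \<beta> J > 0"
    and \<beta>m_less: "\<forall>m. \<forall>i\<in>{1..n}. \<beta>m m i < \<beta> i"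
    and \<beta>m_inc: "\<forall>i\<in>{1..n}. incseq (\<lambda>m. \<beta>m m i)"
    and \<beta>m_lim: "\<forall>i\<in>{1..n}. (\<lambda>m. \<beta>m m i) \<longlonglongrightarrow> \<beta> i"
    and \<beta>m_Lambda: "\<forall>m. \<forall>J. J \<noteq> {} \<and> J \<subseteq> {1..n} \<longrightarrow> Lambda A (\<beta>m m) J > 0"
    and \<rho>_in: "\<forall>m. \<rho> m \<in> Gamma n (\<beta>m m)"
    and \<rho>_min: "\<forall>m. \<forall>\<sigma>\<in>Gamma n (\<beta>m m). Fv n A v (\<rho> m) \<le> Fv n A v \<sigma>"
  shows "\<forall>i\<in>{1..n}. \<exists>C. \<forall>m. integral\<^sup>L lebesgue (\<lambda>x. (norm x)\<^sup>2 * \<rho> m i x) \<le> C"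
proof -
  let ?C = "4 * (\<Sum>k\<in>{1..n}. ln 4 * \<beta> k + (1/2) * (norm (v k))\<^sup>2 * \<beta> k)"
  have "(\<integral>x. (norm x)\<^sup>2 * \<rho> m i x \<partial>lebesgue) \<le> ?C" if i: "i \<in> {1..n}" for m i
  proof -
    have "(\<integral>x. (norm x)\<^sup>2 * \<rho> m i x \<partial>lebesgue) \<le> (\<Sum>k\<in>{1..n}. \<integral>x. (norm x)\<^sup>2 * \<rho> m k x \<partial>lebesgue)"
      using i Gamma_memberD(1)[OF \<rho>_in[rule_format]]
      by (intro member_le_sum integral_nonneg_AE AE_I2) auto
    also have "\<dots> \<le> 4 * (\<Sum>k\<in>{1..n}. ln 4 * \<beta>m m k + (1/2) * (norm (v k))\<^sup>2 * \<beta>m m k)"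
      using \<rho>_in \<rho>_min A_nonneg by (intro moment_sum_le_of_minimizer) auto
    also have "\<dots> \<le> ?C"
      using \<beta>m_less by (intro mult_left_mono sum_mono add_mono) (auto intro: less_imp_le)
    finally show ?thesis .
  qed
  then show ?thesis by blast
qed

end
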